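(* Let $d\geq 1$ and for $i=2,\ldots,d+1$ let $\sigma_i\in\Sigma_{d+1}$ be the transposition $(1\ i)$. Let $0<a_1<\cdots<a_d$ be integers forming a progression-free sequence, and let $m_d>4a_d$ be an integer. Consider the group $\Gamma_d=\Sigma_{d+1}\oplus\mathbb{Z}/m_d$ and its elements $\gamma_i=(\sigma_{i+1},a_i)$ for $i=1,\ldots,d$. Then $(\Gamma_d,\{\gamma_1,\ldots,\gamma_d\})$ satisfies condition $\mathcal{G}(4)$.
   Context: $\Sigma_{d+1}$ is the symmetric group on $\{1,\ldots,d+1\}$. A sequence $a_1<\cdots<a_d$ of integers is progression-free if $a_i+a_j=2a_k$ with $1\leq i,j,k\leq d$ implies $i=j=k$. For a finite group $\Gamma$ with identity $e$ and $D=\{\gamma_1,\ldots,\gamma_d\}\subseteq\Gamma$, and $p\geq 1$, the pair $(\Gamma,D)$ satisfies $\mathcal{R}(p)$ if for every sequence of indices $i_0,\ldots,i_{2p-1}\in\{1,\ldots,d\}$ the equality $\gamma_{i_0}\gamma_{i_1}^{-1}\gamma_{i_2}\gamma_{i_3}^{-1}\cdots\gamma_{i_{2p-2}}\gamma_{i_{2p-1}}^{-1}=e$ implies $i_l=i_{l+1}$ for some $l\in\{0,\ldots,2p-1\}$ (indices modulo $2p$); it satisfies $\mathcal{G}(p)$ if it satisfies $\mathcal{R}(1),\ldots,\mathcal{R}(p)$. *)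

theory Defs
  imports "HOL-Algebra.Sym_Groups" "HOL-Algebra.Elementary_Groups"
begin

definition progression_free :: "nat \<Rightarrow> (nat \<Rightarrow> int) \<Rightarrow> bool" where
  "progression_free d a \<longleftrightarrow>
     (\<forall>i\<in>{1..d}. \<forall>j\<in>{1..d}. \<forall>k\<in>{1..d}. a i + a j = 2 * a k \<longrightarrow> i = j \<and> j = k)"

fun alt_word :: "('g, 'b) monoid_scheme \<Rightarrow> (nat \<Rightarrow> 'g) \<Rightarrow> (nat \<Rightarrow> nat) \<Rightarrow> nat \<Rightarrow> 'g" where
  "alt_word G g i 0 = \<one>\<^bsub>G\<^esub>"
| "alt_word G g i (Suc k) =
     alt_word G g i k \<otimes>\<^bsub>G\<^esub> (g (i (2*k)) \<otimes>\<^bsub>G\<^esub> inv\<^bsub>G\<^esub> (g (i (2*k+1))))"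

definition cond_R :: "('g, 'b) monoid_scheme \<Rightarrow> nat \<Rightarrow> (nat \<Rightarrow> 'g) \<Rightarrow> nat \<Rightarrow> bool" where
  "cond_R G d g p \<longleftrightarrow>
     (\<forall>i :: nat \<Rightarrow> nat. (\<forall>l<2*p. i l \<in> {1..d}) \<and> alt_word G g i p = \<one>\<^bsub>G\<^esub>
        \<longrightarrow> (\<exists>l<2*p. i l = i ((l + 1) mod (2*p))))"

definition cond_G :: "('g, 'b) monoid_scheme \<Rightarrow> nat \<Rightarrow> (nat \<Rightarrow> 'g) \<Rightarrow> nat \<Rightarrow> bool" where
  "cond_G G d g p \<longleftrightarrow> (\<forall>q\<in>{1..p}. cond_R G d g q)"

end

theory Submission
  imports Defs
begin

text \<open>A relation of length 2p in \<Gamma>_d projects to a relation in each factor. In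
  \<Z>/m_d it says that the alternating sum a_{i_0} - a_{i_1} + \<dots> - a_{i_{2p-1}} vanishes
  modulo m_d; as this sum has absolute value at most p (a_d - a_1) < m_d for p \<le> 4, it
  vanishes in \<Z>. In \<Sigma>_{d+1} the relation is a product of 2p \<le> 8 transpositions (1 x)
  equal to the identity whose cyclically consecutive letters differ. Up to renaming the
  letters there are only seven such words, found by enumeration, and for each of them a
  vanishing alternating sum reads a_u + a_v = 2 a_w with u \<noteq> w, which is excluded by
  progression-freeness.\<close>

text \<open>\<open>star_swap y\<close> is \<open>transpose None (Some y)\<close>; the pattern-matching form makes the
  enumeration in \<open>star_trivial_patterns\<close> fast.\<close>

fun star_swap :: "'a \<Rightarrow> 'a option \<Rightarrow> 'a option" where
  "star_swap y None = Some y"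
| "star_swap y (Some w) = (if w = y then None else Some w)"

lemma star_swap_eq_transpose: "star_swap y z = transpose None (Some y) z"
  by (cases z) (auto simp: transpose_def)

lemma foldr_star_swap: "foldr star_swap xs z = apply_transps (map (\<lambda>y. (None, Some y)) xs) z"
  by (induction xs) (simp_all add: star_swap_eq_transpose)

definition star_trivial :: "'a list \<Rightarrow> bool" where
  "star_trivial xs \<longleftrightarrow> (\<forall>z \<in> set (None # map Some xs). foldr star_swap xs z = z)"

lemma star_trivial_relabel:
  assumes "inj_on leaf (set xs)" "c \<notin> leaf ` set xs"
    and "apply_transps (map (\<lambda>y. (c, leaf y)) xs) = id" "inj_on h (set xs)"
  shows "star_trivial (map h xs)"
proof -
  define \<phi> where "\<phi> p = (if p = c then None else Some (h (the_inv_into (set xs) leaf p)))" for p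
  have \<phi>_leaf: "\<phi> (leaf y) = Some (h y)" if "y \<in> set xs" for y
    using that assms(1,2) by (auto simp: \<phi>_def the_inv_into_f_f)
  have \<phi>_inj: "inj_on \<phi> (insert c (leaf ` set xs))"
    using assms(1,4) by (auto simp: inj_on_def \<phi>_leaf) (auto simp: \<phi>_def)
  have "map (\<lambda>y. (None, Some y)) (map h xs) = map (map_prod \<phi> \<phi>) (map (\<lambda>y. (c, leaf y)) xs)"
    by (simp add: \<phi>_leaf) (simp add: \<phi>_def)
  then have "apply_transps (map (\<lambda>y. (None, Some y)) (map h xs))
      = apply_transps (map (map_prod \<phi> \<phi>) (map (\<lambda>y. (c, leaf y)) xs))"
    by (simp only:)
  also have "\<dots> = map_permutation (insert c (leaf ` set xs)) \<phi> (apply_transps (map (\<lambda>y. (c, leaf y)) xs))"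
    by (rule map_permutation_apply_transps[OF \<phi>_inj, symmetric]) auto
  also have "\<dots> = id"
    using \<phi>_inj by (simp only: assms(3) map_permutation_id')
  finally show ?thesis
    unfolding star_trivial_def foldr_star_swap by simp
qed

definition cyclically_distinct :: "'a list \<Rightarrow> bool" where
  "cyclically_distinct xs \<longleftrightarrow> distinct_adj (xs @ take 1 xs)"

lemma cyclically_distinct_conv_nth:
  "cyclically_distinct xs \<longleftrightarrow> (\<forall>l<length xs. xs ! l \<noteq> xs ! (Suc l mod length xs))"
proof (cases "xs = []")
  case False
  have "(xs @ take 1 xs) ! l = xs ! (l mod length xs)" if "l \<le> length xs" for l
    using that False by (cases "l = length xs") (auto simp: nth_append hd_conv_nth take_Suc)
  then show ?thesis
    using False unfolding cyclically_distinct_def distinct_adj_conv_nth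
    by (auto simp: min_def)
qed (simp add: cyclically_distinct_def)

lemma cyclically_distinct_map:
  "cyclically_distinct xs \<Longrightarrow> inj_on h (set xs) \<Longrightarrow> cyclically_distinct (map h xs)"
  unfolding cyclically_distinct_def
  by (metis distinct_adj_mapI map_append set_append set_take_subset sup.absorb1 take_map)

primrec alternating_sum :: "int list \<Rightarrow> int" where
  "alternating_sum [] = 0"
| "alternating_sum (y # ys) = y - alternating_sum ys"

lemma alternating_sum_append:
  "alternating_sum (xs @ ys) = alternating_sum xs + (-1) ^ length xs * alternating_sum ys"
  by (induction xs) (simp_all add: algebra_simps)

lemma abs_alternating_sum_le:
  "even (length xs) \<Longrightarrow> set xs \<subseteq> {lo..hi} \<Longrightarrow>
     \<bar>alternating_sum xs\<bar> \<le> int (length xs div 2) * (hi - lo)"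
  by (induction xs rule: induct_list012) (auto simp: algebra_simps)

definition forces_progression :: "'a list \<Rightarrow> bool" where
  "forces_progression xs \<longleftrightarrow>
     (\<exists>u\<in>set xs. \<exists>v\<in>set xs. \<exists>w\<in>set xs. u \<noteq> w \<and>
        (\<forall>x :: 'a \<Rightarrow> int. alternating_sum (map x xs) = 0 \<longrightarrow> x u + x v = 2 * x w))"

lemma forces_progressionI:
  assumes "u \<in> set xs" "v \<in> set xs" "w \<in> set xs" "u \<noteq> w"
    and "\<And>x. alternating_sum (map x xs) = 0 \<Longrightarrow> x u + x v = 2 * x w"
  shows "forces_progression xs"
  using assms unfolding forces_progression_def by blast

lemma forces_progression_map_inj:
  assumes "forces_progression (map h xs)" "inj_on h (set xs)"
  shows "forces_progression xs"
proof -
  obtain u v w where uvw: "u \<in> set xs" "v \<in> set xs" "w \<in> set xs" "h u \<noteq> h w"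
    and prog: "\<And>x. alternating_sum (map x (map h xs)) = 0 \<Longrightarrow> x (h u) + x (h v) = 2 * x (h w)"
    using assms(1) unfolding forces_progression_def by auto
  have "x u + x v = 2 * x w" if "alternating_sum (map x xs) = 0" for x
  proof -
    have "map (x \<circ> inv_into (set xs) h) (map h xs) = map x xs"
      using assms(2) by simp
    then have "alternating_sum (map (x \<circ> inv_into (set xs) h) (map h xs)) = 0"
      using that by (simp only:)
    then have "(x \<circ> inv_into (set xs) h) (h u) + (x \<circ> inv_into (set xs) h) (h v)
        = 2 * (x \<circ> inv_into (set xs) h) (h w)"
      by (rule prog)
    then show ?thesis
      using uvw assms(2) by simp
  qed
  with uvw show ?thesis
    by (intro forces_progressionI[of u xs v w]) auto
qed

lemma forces_progression_patterns:
  fixes c :: "nat list"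
  assumes "c \<in> set [[0,1,0,1,0,1], [0,1,0,2,0,1,0,2], [0,1,0,2,1,0,1,2], [0,1,2,0,1,0,2,1],
                     [0,1,2,0,2,1,0,2], [0,1,2,1,0,1,2,1], [0,1,2,1,0,2,1,2]]"
  shows "forces_progression c"
proof -
  from assms consider
    "c = [0,1,0,1,0,1]" | "c = [0,1,0,2,0,1,0,2]" | "c = [0,1,0,2,1,0,1,2]" | "c = [0,1,2,0,1,0,2,1]" |
    "c = [0,1,2,0,2,1,0,2]" | "c = [0,1,2,1,0,1,2,1]" | "c = [0,1,2,1,0,2,1,2]"
    by auto
  then show ?thesis
  proof cases
    case 1 then show ?thesis by (intro forces_progressionI[of 0 _ 0 1]) auto
  next
    case 2 then show ?thesis by (intro forces_progressionI[of 1 _ 2 0]) auto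
  next
    case 3 then show ?thesis by (intro forces_progressionI[of 0 _ 1 2]) auto
  next
    case 4 then show ?thesis by (intro forces_progressionI[of 0 _ 1 2]) auto
  next
    case 5 then show ?thesis by (intro forces_progressionI[of 0 _ 2 1]) auto
  next
    case 6 then show ?thesis by (intro forces_progressionI[of 0 _ 2 1]) auto
  next
    case 7 then show ?thesis by (intro forces_progressionI[of 1 _ 2 0]) auto
  qed
qed

text \<open>Words whose letters 0, 1, 2, \<dots> appear in order of first occurrence and in which no
  letter is repeated immediately: \<open>pattern_tails k p n\<close> lists their possible continuations of
  length \<open>n\<close> after a prefix that used the letters below \<open>k\<close> and ended with \<open>p\<close>.\<close>

fun pattern_tails :: "nat \<Rightarrow> nat \<Rightarrow> nat \<Rightarrow> nat list list" where
  "pattern_tails k p 0 = [[]]"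
| "pattern_tails k p (Suc n) =
     concat (map (\<lambda>v. map (Cons v) (pattern_tails (if v = k then Suc k else k) v n))
                 (filter (\<lambda>v. v \<noteq> p) [0..<Suc k]))"

lemma Cons_in_pattern_tails:
  "v \<le> k \<Longrightarrow> v \<noteq> p \<Longrightarrow> vs \<in> set (pattern_tails (if v = k then Suc k else k) v n) \<Longrightarrow>
     v # vs \<in> set (pattern_tails k p (Suc n))"
  by (auto simp del: upt_Suc)

lemma pattern_tails_relabel:
  assumes "distinct s" "p \<in> set s" "distinct_adj (p # xs)"
  shows "\<exists>h. (\<forall>j<length s. h (s ! j) = j) \<and> inj_on h (set s \<union> set xs) \<and>
             map h xs \<in> set (pattern_tails (length s) (h p) (length xs))"
  using assms
proof (induction xs arbitrary: s p)
  case Nil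
  define h where "h = the_inv_into {..<length s} ((!) s)"
  have index: "\<forall>j<length s. h (s ! j) = j"
    unfolding h_def using Nil.prems(1) by (simp add: the_inv_into_f_f inj_on_nth)
  then have "inj_on h (set s)"
    by (auto simp: inj_on_def in_set_conv_nth)
  with index show ?case by auto
next
  case (Cons x xs)
  define s' where "s' = (if x \<in> set s then s else s @ [x])"
  have "distinct s'" "x \<in> set s'" "distinct_adj (x # xs)"
    using Cons.prems by (auto simp: s'_def)
  then obtain h where index: "\<forall>j<length s'. h (s' ! j) = j"
    and inj: "inj_on h (set s' \<union> set xs)"
    and tail: "map h xs \<in> set (pattern_tails (length s') (h x) (length xs))"
    using Cons.IH by blast
  have prefix: "s' = s @ (if x \<in> set s then [] else [x])"
    by (simp add: s'_def)
  have index_s: "\<forall>j<length s. h (s ! j) = j"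
  proof (intro allI impI)
    fix j assume "j < length s"
    then show "h (s ! j) = j"
      using index[rule_format, of j] prefix by (simp add: nth_append)
  qed
  have hx_ne: "h x \<noteq> h p"
    using Cons.prems inj by (auto simp: s'_def inj_on_eq_iff)
  have hx_le: "h x \<le> length s" and length_s': "length s' = (if h x = length s then Suc (length s) else length s)"
  proof -
    have "h x < length s" if "x \<in> set s"
      using that index_s by (auto simp: in_set_conv_nth)
    moreover have "h x = length s" if "x \<notin> set s"
      using that index[rule_format, of "length s"] by (simp add: s'_def)
    ultimately show "h x \<le> length s" "length s' = (if h x = length s then Suc (length s) else length s)"
      by (cases "x \<in> set s"; force simp: s'_def)+
  qed
  have "h x # map h xs \<in> set (pattern_tails (length s) (h p) (Suc (length xs)))"
    by (rule Cons_in_pattern_tails) (use hx_ne hx_le length_s' tail in auto)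
  moreover have "inj_on h (set s \<union> set (x # xs))"
    using inj by (rule inj_on_subset) (auto simp: s'_def)
  ultimately show ?case
    using index_s by (intro exI[of _ h]) simp
qed

definition even_patterns_upto_8 :: "nat list list" where
  "even_patterns_upto_8 = concat (map (\<lambda>n. map (Cons 0) (pattern_tails 1 0 n)) [1, 3, 5, 7])"

lemma star_trivial_patterns:
  "filter (\<lambda>c. cyclically_distinct c \<and> star_trivial c)
     even_patterns_upto_8
   = [[0,1,0,1,0,1], [0,1,0,2,0,1,0,2], [0,1,0,2,1,0,1,2], [0,1,2,0,1,0,2,1],
      [0,1,2,0,2,1,0,2], [0,1,2,1,0,1,2,1], [0,1,2,1,0,2,1,2]]"
  by code_simp

theorem star_identity_forces_progression:
  assumes "even (length xs)" "xs \<noteq> []" "length xs \<le> 8" "cyclically_distinct xs"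
    and "inj_on leaf (set xs)" "c \<notin> leaf ` set xs" "apply_transps (map (\<lambda>y. (c, leaf y)) xs) = id"
  shows "forces_progression xs"
proof -
  obtain x ys where xs: "xs = x # ys"
    using assms(2) by (cases xs) auto
  have "distinct_adj (x # ys)"
    using assms(4) distinct_adj_appendD1[of "x # ys"] unfolding cyclically_distinct_def xs by simp
  then obtain h where "h x = 0" "inj_on h (set xs)"
    and tail: "map h ys \<in> set (pattern_tails 1 0 (length ys))"
    using pattern_tails_relabel[of "[x]" x ys] xs by auto
  have "star_trivial (map h xs)"
    using assms(5-7) \<open>inj_on h (set xs)\<close> by (rule star_trivial_relabel)
  moreover have "cyclically_distinct (map h xs)"
    using assms(4) \<open>inj_on h (set xs)\<close> by (rule cyclically_distinct_map)
  moreover have "map h xs \<in> set even_patterns_upto_8"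
  proof -
    have "length ys \<in> set [1, 3, 5, 7]"
      using assms(1,3) xs by auto presburger
    moreover have "map h xs \<in> set (map (Cons 0) (pattern_tails 1 0 (length ys)))"
      using tail \<open>h x = 0\<close> xs by simp
    ultimately show ?thesis
      unfolding even_patterns_upto_8_def set_concat set_map image_image by (rule UN_I)
  qed
  ultimately have "map h xs \<in> set (filter (\<lambda>c. cyclically_distinct c \<and> star_trivial c)
      even_patterns_upto_8)"
    unfolding set_filter by blast
  then have "forces_progression (map h xs)"
    unfolding star_trivial_patterns by (rule forces_progression_patterns)
  then show ?thesis
    using \<open>inj_on h (set xs)\<close> by (rule forces_progression_map_inj)
qed

lemma alt_word_DirProd:
  assumes "group G" "group H" "\<forall>l<2*k. g (i l) \<in> carrier (G \<times>\<times> H)"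
  shows "alt_word (G \<times>\<times> H) g i k = (alt_word G (fst \<circ> g) i k, alt_word H (snd \<circ> g) i k)"
  using assms(3)
proof (induction k)
  case (Suc k)
  have "fst (g (i (2*k+1))) \<in> carrier G" "snd (g (i (2*k+1))) \<in> carrier H"
    using Suc.prems by auto
  then have "inv\<^bsub>G \<times>\<times> H\<^esub> g (i (2*k+1)) = (inv\<^bsub>G\<^esub> fst (g (i (2*k+1))), inv\<^bsub>H\<^esub> snd (g (i (2*k+1))))"
    using inv_DirProd[OF assms(1,2)] by (metis prod.collapse)
  then show ?case
    using Suc by (simp add: mult_DirProd')
qed simp

lemma alt_word_sym_group:
  assumes "\<forall>l<2*k. i l < n"
  shows "alt_word (sym_group n) (\<lambda>j. transpose 1 (j + 1)) i k
         = apply_transps (map (\<lambda>j. (1, j + 1)) (map i [0..<2*k]))"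
  using assms
proof (induction k)
  case (Suc k)
  have "transpose 1 (i (2*k+1) + 1) \<in> carrier (sym_group n)"
    using Suc.prems by (auto simp: sym_group_carrier intro!: permutes_swap_id)
  then show ?case
    using Suc by (simp add: sym_group_mult)
qed (simp add: sym_group_one)

lemma alt_word_integer_mod_group:
  "alt_word (integer_mod_group m) (\<lambda>j. x j mod int m) i k = alternating_sum (map x (map i [0..<2*k])) mod int m"
proof (induction k)
  case (Suc k)
  have "x j mod int m \<in> carrier (integer_mod_group m)" for j
    by (simp add: carrier_integer_mod_group)
  then show ?case
    using Suc by (simp add: alternating_sum_append mod_add_eq mod_diff_right_eq)
qed simp

lemma alt_word_sym_group_integer_mod_group:
  assumes "\<forall>l<2*k. i l \<in> {1..d}"
  shows "alt_word (sym_group (d + 1) \<times>\<times> integer_mod_group m) (\<lambda>j. (transpose 1 (j + 1), a j mod int m)) i k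
       = (apply_transps (map (\<lambda>j. (1, j + 1)) (map i [0..<2*k])), alternating_sum (map a (map i [0..<2*k])) mod int m)"
proof -
  have "(transpose 1 (i l + 1), a (i l) mod int m) \<in> carrier (sym_group (d + 1) \<times>\<times> integer_mod_group m)"
    if "l < 2*k" for l
    using assms that
    by (auto simp: sym_group_carrier carrier_integer_mod_group intro!: permutes_swap_id)
  then have "alt_word (sym_group (d + 1) \<times>\<times> integer_mod_group m) (\<lambda>j. (transpose 1 (j + 1), a j mod int m)) i k
      = (alt_word (sym_group (d + 1)) (\<lambda>j. transpose 1 (j + 1)) i k,
         alt_word (integer_mod_group m) (\<lambda>j. a j mod int m) i k)"
    using alt_word_DirProd[OF sym_group_is_group group_integer_mod_group] by (simp add: comp_def)
  also have "\<dots> = (apply_transps (map (\<lambda>j. (1, j + 1)) (map i [0..<2*k])), alternating_sum (map a (map i [0..<2*k])) mod int m)"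
  proof -
    have "\<forall>l<2*k. i l < d + 1"
      using assms by auto
    then show ?thesis
      by (simp only: alt_word_sym_group alt_word_integer_mod_group)
  qed
  finally show ?thesis .
qed

lemma mod_eq_0_abs_less:
  fixes x n :: int
  assumes "x mod n = 0" "\<bar>x\<bar> < n"
  shows "x = 0"
proof (rule ccontr)
  assume "x \<noteq> 0"
  then have "\<bar>n\<bar> \<le> \<bar>x\<bar>"
    using assms(1) by (intro dvd_imp_le_int) (auto simp: mod_eq_0_iff_dvd)
  with assms(2) show False
    by linarith
qed

lemma abs_alternating_sum_less:
  fixes a :: "nat \<Rightarrow> int"
  assumes "d \<ge> 1" "\<forall>j\<in>{1..d}. \<forall>k\<in>{1..d}. j < k \<longrightarrow> a j < a k" "0 < a 1" "4 * a d < M"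
    and "set xs \<subseteq> {1..d}" "even (length xs)" "length xs \<le> 8"
  shows "\<bar>alternating_sum (map a xs)\<bar> < M"
proof -
  have a_bounds: "a 1 \<le> a j \<and> a j \<le> a d" if "j \<in> {1..d}" for j
  proof -
    have "1 \<in> {1..d}" "d \<in> {1..d}"
      using that by auto
    then show ?thesis
      using that assms(2) by (auto simp: le_less)
  qed
  then have "set (map a xs) \<subseteq> {a 1..a d}"
    using assms(5) by auto
  then have "\<bar>alternating_sum (map a xs)\<bar> \<le> int (length xs div 2) * (a d - a 1)"
    using abs_alternating_sum_le[of "map a xs"] assms(6) by simp
  also have "\<dots> \<le> 4 * (a d - a 1)"
    using assms(1,7) a_bounds[of 1] by (intro mult_right_mono) auto
  also have "\<dots> < M"
    using assms(3,4) by simp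
  finally show ?thesis .
qed

lemma progression_free_not_forces_progression:
  assumes "progression_free d a" "set xs \<subseteq> {1..d}" "alternating_sum (map a xs) = 0"
  shows "\<not> forces_progression xs"
  using assms unfolding progression_free_def forces_progression_def by blast

theorem proposition5p6:
  fixes d m :: nat and a :: "nat \<Rightarrow> int"
  assumes "d \<ge> 1"
    and "0 < a 1"
    and "\<forall>i\<in>{1..d}. \<forall>j\<in>{1..d}. i < j \<longrightarrow> a i < a j"
    and "progression_free d a"
    and "int m > 4 * a d"
  shows "cond_G (sym_group (d + 1) \<times>\<times> integer_mod_group m) d
           (\<lambda>i. (transpose 1 (i + 1), a i mod int m)) 4"
  unfolding cond_G_def cond_R_def
proof (intro ballI allI impI)
  fix q i
  assume q: "q \<in> {1..4::nat}"
    and word: "(\<forall>l<2*q. i l \<in> {1..d}) \<and> alt_word (sym_group (d + 1) \<times>\<times> integer_mod_group m)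
       (\<lambda>i. (transpose 1 (i + 1), a i mod int m)) i q = \<one>\<^bsub>sym_group (d + 1) \<times>\<times> integer_mod_group m\<^esub>"
  define xs where "xs = map i [0..<2*q]"
  have labels: "set xs \<subseteq> {1..d}" and length_xs: "length xs = 2*q" and "xs \<noteq> []"
    using word q by (auto simp: xs_def)
  have transps: "apply_transps (map (\<lambda>j. (1, j + 1)) xs) = id"
    and sum_mod: "alternating_sum (map a xs) mod int m = 0"
    using word alt_word_sym_group_integer_mod_group[of q i d m a] by (simp_all add: xs_def sym_group_one)
  have "\<bar>alternating_sum (map a xs)\<bar> < int m"
    using abs_alternating_sum_less[OF assms(1,3,2,5) labels] q length_xs by simp
  with sum_mod have "alternating_sum (map a xs) = 0"
    by (rule mod_eq_0_abs_less)
  then have "\<not> forces_progression xs"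
    by (rule progression_free_not_forces_progression[OF assms(4) labels])
  moreover have "1 \<notin> (\<lambda>j. j + 1) ` set xs" "inj_on (\<lambda>j. j + 1) (set xs)"
    using labels by auto
  ultimately have "\<not> cyclically_distinct xs"
    using star_identity_forces_progression[of xs "\<lambda>j. j + 1" 1] transps q length_xs \<open>xs \<noteq> []\<close>
    by auto
  then show "\<exists>l<2*q. i l = i ((l + 1) mod (2*q))"
    by (auto simp: cyclically_distinct_conv_nth xs_def)
qed

end
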